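(* Let $(V,\eta)$ be a real vector space of dimension $n+2$, $n>1$, with symmetric bilinear form $\eta$ of signature $(+,-,\dots,-)$, $G=SO_0(\eta)$, $\mathfrak g=so(\eta)$. Fix $\mathbf s,\mathbf t\in V$ with $\eta(\mathbf s,\mathbf s)=-1$, $\eta(\mathbf t,\mathbf t)=1$, $\eta(\mathbf s,\mathbf t)=0$, $\mathbf f:=\mathbf t-\mathbf s$, $\mathfrak a:=\{Y\in\mathfrak g:Y\mathbf s=0\}$, $\mathfrak c:=\mathrm{span}\{\Lambda_{x\mathbf f}:x\in\mathbf s^\perp\}$, $A:=\{g\in G:g\mathbf s=\pm\mathbf s\}$, and $\mathfrak a^0\subset\mathfrak g^*$ the annihilator of $\mathfrak a$. Let $(\rho_\alpha)$ be an orthonormal basis of $\mathfrak a^0$ with respect to $\tilde k$, and assume elements $c_\alpha\in\mathfrak c$ satisfy $\tilde k(\psi,\mathrm{ad}^\#(a)\rho_\alpha)=\langle\psi,\mathrm{ad}(a)c_\alpha\rangle$ for all $\psi\in\mathfrak a^0$ and all $a\in A$. Then for every $\varphi\in\mathfrak a^0$, as functions on $\mathfrak a^0\times A$, $$\tilde k_\varphi=\sum_\alpha \mathrm{sgn}(\rho_\alpha)\,\tilde k_{\varphi\rho_\alpha}\,\widetilde{X^L_{c_\alpha}}.$$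
   Context: $\Lambda_{xy}(z)=\eta(y,z)x-\eta(x,z)y$ for $x,y,z\in V$. $k$ is the bilinear form on $\mathfrak g$ with $k(\Lambda_{xy},\Lambda_{zt})=\eta(x,t)\eta(y,z)-\eta(x,z)\eta(y,t)$, also viewed as the isomorphism $k:\mathfrak g\to\mathfrak g^*$, $\langle k(X),Y\rangle=k(X,Y)$; $\tilde k(\varphi,\psi):=k(k^{-1}\varphi,k^{-1}\psi)$ on $\mathfrak g^*$. The restriction of $\tilde k$ to $\mathfrak a^0$ is nondegenerate of Minkowski signature; an orthonormal basis $(\rho_\alpha)$ means $\tilde k(\rho_\alpha,\rho_\beta)=\tilde k(\rho_\alpha,\rho_\alpha)\delta_{\alpha\beta}$ with $|\tilde k(\rho_\alpha,\rho_\alpha)|=1$, and $\mathrm{sgn}(\rho_\alpha):=\tilde k(\rho_\alpha,\rho_\alpha)$. $\mathrm{ad}(g)X=gXg^{-1}$, $\mathrm{ad}^\#(g)=\mathrm{ad}(g^{-1})^*$. Functions on $\mathfrak a^0\times A$: $\tilde k_\varphi(\chi,a)=\tilde k(\varphi,\chi)$, $\tilde k_{\varphi\psi}(\chi,a)=\tilde k(\varphi,\mathrm{ad}^\#(a)\psi)$, and for $p\in\mathfrak c$, $\widetilde{X^L_p}(\chi,a)=\langle\chi,\mathrm{ad}(a)p\rangle$. *)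

theory Defs
  imports "HOL-Analysis.Analysis"
begin

type_synonym 'n mat = "real^'n^'n"
type_synonym 'n functional = "'n mat \<Rightarrow> real"

text \<open>V is modelled as real^'n; the symmetric bilinear form eta is given by a matrix E.\<close>

definition eta :: "'n::finite mat \<Rightarrow> real^'n \<Rightarrow> real^'n \<Rightarrow> real" where
  "eta E x y = x \<bullet> (E *v y)"

definition lorentz_form :: "'n::finite mat \<Rightarrow> bool" where
  "lorentz_form E \<longleftrightarrow> transpose E = E \<and>
     (\<exists>(P::real^'n^'n) i0. invertible P \<and>
        E = transpose P ** (\<chi> i j. if i = j then (if i = i0 then 1 else -1) else 0) ** P)"

definition Lam :: "'n::finite mat \<Rightarrow> real^'n \<Rightarrow> real^'n \<Rightarrow> 'n mat" where
  "Lam E x y = matrix (\<lambda>z. eta E y z *\<^sub>R x - eta E x z *\<^sub>R y)"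

definition so :: "'n::finite mat \<Rightarrow> 'n mat set" where
  "so E = {X. transpose X ** E + E ** X = 0}"

definition SO :: "'n::finite mat \<Rightarrow> 'n mat set" where
  "SO E = {g. transpose g ** E ** g = E \<and> det g = 1}"

definition SO0 :: "'n::finite mat \<Rightarrow> 'n mat set" where
  "SO0 E = connected_component_set (SO E) (mat 1)"

text \<open>The form k on g: k(X,Y) = tr(XY)/2, which is the bilinear form with
  k(Lam x y, Lam z t) = eta(x,t)eta(y,z) - eta(x,z)eta(y,t).\<close>
definition kform :: "'n::finite mat \<Rightarrow> 'n mat \<Rightarrow> real" where
  "kform X Y = trace (X ** Y) / 2"

text \<open>Dual space g^*: linear functionals on so(eta), extended by 0 outside so(eta).\<close>
definition gdual :: "'n::finite mat \<Rightarrow> 'n functional set" where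
  "gdual E = {\<phi>. (\<forall>X\<in>so E. \<forall>Y\<in>so E. \<phi> (X + Y) = \<phi> X + \<phi> Y) \<and>
                  (\<forall>c. \<forall>X\<in>so E. \<phi> (c *\<^sub>R X) = c * \<phi> X) \<and>
                  (\<forall>X. X \<notin> so E \<longrightarrow> \<phi> X = 0)}"

definition kinv :: "'n::finite mat \<Rightarrow> 'n functional \<Rightarrow> 'n mat" where
  "kinv E \<phi> = (THE X. X \<in> so E \<and> (\<forall>Y\<in>so E. kform X Y = \<phi> Y))"

definition ktilde :: "'n::finite mat \<Rightarrow> 'n functional \<Rightarrow> 'n functional \<Rightarrow> real" where
  "ktilde E \<phi> \<psi> = kform (kinv E \<phi>) (kinv E \<psi>)"

definition ad :: "'n::finite mat \<Rightarrow> 'n mat \<Rightarrow> 'n mat" where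
  "ad g X = g ** X ** matrix_inv g"

definition adsharp :: "'n::finite mat \<Rightarrow> 'n mat \<Rightarrow> 'n functional \<Rightarrow> 'n functional" where
  "adsharp E g \<phi> = (\<lambda>X. if X \<in> so E then \<phi> (ad (matrix_inv g) X) else 0)"

definition annihilator :: "'n::finite mat \<Rightarrow> 'n mat set \<Rightarrow> 'n functional set" where
  "annihilator E S = {\<phi> \<in> gdual E. \<forall>Y\<in>S. \<phi> Y = 0}"

definition alg_a :: "'n::finite mat \<Rightarrow> real^'n \<Rightarrow> 'n mat set" where
  "alg_a E s = {Y \<in> so E. Y *v s = 0}"

definition alg_c :: "'n::finite mat \<Rightarrow> real^'n \<Rightarrow> real^'n \<Rightarrow> 'n mat set" where
  "alg_c E s t = span {Lam E x (t - s) | x. eta E x s = 0}"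

definition groupA :: "'n::finite mat \<Rightarrow> real^'n \<Rightarrow> 'n mat set" where
  "groupA E s = {g \<in> SO0 E. g *v s = s \<or> g *v s = - s}"

definition ktilde_orthonormal_basis ::
  "'n::finite mat \<Rightarrow> 'n functional set \<Rightarrow> 'i set \<Rightarrow> ('i \<Rightarrow> 'n functional) \<Rightarrow> bool" where
  "ktilde_orthonormal_basis E S I \<rho> \<longleftrightarrow>
     finite I \<and> \<rho> ` I \<subseteq> S \<and>
     (\<forall>u. (\<forall>X. (\<Sum>\<alpha>\<in>I. u \<alpha> * \<rho> \<alpha> X) = 0) \<longrightarrow> (\<forall>\<alpha>\<in>I. u \<alpha> = 0)) \<and>
     (\<forall>\<phi>\<in>S. \<exists>u. \<forall>X. \<phi> X = (\<Sum>\<alpha>\<in>I. u \<alpha> * \<rho> \<alpha> X)) \<and>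
     (\<forall>\<alpha>\<in>I. \<forall>\<beta>\<in>I. \<alpha> \<noteq> \<beta> \<longrightarrow> ktilde E (\<rho> \<alpha>) (\<rho> \<beta>) = 0) \<and>
     (\<forall>\<alpha>\<in>I. \<bar>ktilde E (\<rho> \<alpha>) (\<rho> \<alpha>)\<bar> = 1)"

definition sgn_k :: "'n::finite mat \<Rightarrow> 'n functional \<Rightarrow> real" where
  "sgn_k E \<rho> = ktilde E \<rho> \<rho>"

definition kt_fun :: "'n::finite mat \<Rightarrow> 'n functional \<Rightarrow> 'n functional \<times> 'n mat \<Rightarrow> real" where
  "kt_fun E \<phi> = (\<lambda>(xi, a). ktilde E \<phi> xi)"

definition kt_fun2 :: "'n::finite mat \<Rightarrow> 'n functional \<Rightarrow> 'n functional \<Rightarrow> 'n functional \<times> 'n mat \<Rightarrow> real" where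
  "kt_fun2 E \<phi> \<psi> = (\<lambda>(xi, a). ktilde E \<phi> (adsharp E a \<psi>))"

definition XL_fun :: "'n::finite mat \<Rightarrow> 'n functional \<times> 'n mat \<Rightarrow> real" where
  "XL_fun p = (\<lambda>(xi, a). xi (ad a p))"

end

theory Submission
  imports Defs
begin

(* Put xi' := ad#(a^-1) xi, i.e. xi'(X) = xi(ad(a) X); it lies again in the annihilator a0,
   because a^-1 also maps s to +-s.  The hypothesis on c_alpha at a = 1 gives
   xi(ad(a) c_alpha) = xi'(c_alpha) = ktilde(rho_alpha, xi'), while
   ktilde(phi, ad#(a) rho_alpha) = rho_alpha(ad(a^-1) K) with K = k^-1(phi).  Hence the right-hand
   side is the expansion of xi' in the ktilde-orthonormal basis (rho_alpha), evaluated at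
   ad(a^-1) K, that is xi'(ad(a^-1) K) = xi(K) = ktilde(phi, xi). *)

section \<open>Linear algebra\<close>

lemma bilinear_matrix_mult: "bilinear ((**) :: real^'n^'m \<Rightarrow> real^'p^'n \<Rightarrow> real^'p^'m)"
  unfolding bilinear_def
  by (auto intro!: linearI
      simp: matrix_matrix_mult_def vec_eq_iff algebra_simps sum.distrib sum_distrib_left)

lemma linear_transpose: "linear (transpose :: real^'n^'m \<Rightarrow> real^'m^'n)"
  by (auto intro!: linearI simp: transpose_def vec_eq_iff)

lemma trace_scaleR: "trace (c *\<^sub>R A) = c * trace (A :: real^'n^'n)"
  by (simp add: trace_def sum_distrib_left)

lemma trace_mult_transpose: "trace (M ** transpose M) = M \<bullet> (M :: real^'n^'n)"
  by (simp add: trace_def matrix_matrix_mult_def transpose_def inner_vec_def)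

lemma matrix_inv_left_right:
  fixes A :: "real^'n^'n"
  assumes "invertible A"
  shows "A ** matrix_inv A = mat 1" "matrix_inv A ** A = mat 1"
  using someI_ex[OF assms[unfolded invertible_def]] unfolding matrix_inv_def by auto

lemma matrix_inv_unique:
  fixes A B :: "real^'n^'n"
  assumes "A ** B = mat 1"
  shows "matrix_inv A = B"
proof -
  have inv: "invertible A" using assms invertible_right_inverse by blast
  have "matrix_inv A = matrix_inv A ** (A ** B)" by (simp add: assms)
  also have "\<dots> = B" by (simp add: matrix_mul_assoc matrix_inv_left_right(2)[OF inv])
  finally show ?thesis .
qed

lemma matrix_inv_matrix_inv:
  fixes A :: "real^'n^'n"
  shows "invertible A \<Longrightarrow> matrix_inv (matrix_inv A) = A"
  by (simp add: matrix_inv_left_right matrix_inv_unique)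

lemma matrix_inv_mat_1: "matrix_inv (mat 1 :: real^'n^'n) = mat 1"
  by (simp add: matrix_inv_unique)

lemma transpose_matrix_inv_symmetric:
  fixes E :: "real^'n^'n"
  assumes "transpose E = E" "invertible E"
  shows "transpose (matrix_inv E) = matrix_inv E"
proof -
  have "transpose (matrix_inv E) ** E = mat 1"
    by (metis assms matrix_inv_left_right(1) matrix_transpose_mul transpose_mat)
  then show ?thesis by (metis matrix_inv_unique matrix_left_right_inverse)
qed

lemma matrix_inv_stabilizes_line:
  fixes g :: "real^'n^'n"
  assumes "invertible g" "g *v s = s \<or> g *v s = - s"
  shows "matrix_inv g *v s = s \<or> matrix_inv g *v s = - s"
proof -
  have "matrix_inv g *v (g *v s) = s"
    by (simp add: matrix_vector_mul_assoc matrix_inv_left_right assms(1))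
  then show ?thesis
    using assms(2) linear_neg[OF matrix_vector_mul_linear, of "matrix_inv g" s] by (metis minus_minus)
qed

lemma linear_inj_on_imp_surj_on:
  fixes f :: "'a::euclidean_space \<Rightarrow> 'a"
  assumes f: "linear f" and S: "subspace S" and "f ` S \<subseteq> S" "inj_on f S"
  shows "f ` S = S"
proof -
  have "dim (f ` S) = dim S" using dim_image_eq[of f S] f S assms(4) by (metis span_eq_iff)
  then show ?thesis
    using subspace_dim_equal[OF linear_subspace_image[OF f S] S] assms(3) by simp
qed

lemma bilinear_nondegenerate_represents:
  fixes B :: "'a::euclidean_space \<Rightarrow> 'a \<Rightarrow> real"
  assumes S: "subspace S" and B: "bilinear B"
    and nondeg: "\<And>x. x \<in> S \<Longrightarrow> \<forall>y\<in>S. B x y = 0 \<Longrightarrow> x = 0"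
    and add: "\<And>x y. x \<in> S \<Longrightarrow> y \<in> S \<Longrightarrow> \<phi> (x + y) = \<phi> x + \<phi> y"
    and scale: "\<And>c x. x \<in> S \<Longrightarrow> \<phi> (c *\<^sub>R x) = c * \<phi> x"
  shows "\<exists>x\<in>S. \<forall>y\<in>S. B x y = \<phi> y"
proof -
  obtain Bs where Bs: "Bs \<subseteq> S" "independent Bs" "span Bs = S"
    using basis_exists[of S] by (metis S span_subspace)
  have coeffs_0: "\<forall>b\<in>Bs. u b = 0" if "(\<Sum>b\<in>Bs. u b *\<^sub>R b) = 0" for u
    using Bs(2) that independent_explicit by blast
  have agree: "\<forall>y\<in>S. B x y = \<phi> y" if "\<forall>b\<in>Bs. B x b = \<phi> b" for x
  proof -
    have "\<phi> 0 = 0" using scale[of 0 0] S by (simp add: subspace_0)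
    then have "subspace {y \<in> S. B x y = \<phi> y}"
      unfolding subspace_def using S add scale
      by (auto simp: subspace_0 subspace_add subspace_scale
          bilinear_rzero[OF B] bilinear_radd[OF B] bilinear_rmul[OF B])
    then show ?thesis using span_minimal[of Bs "{y \<in> S. B x y = \<phi> y}"] Bs that by auto
  qed
  \<comment> \<open>F x has the coordinates B x b; nondegeneracy makes F injective, hence onto S.\<close>
  define F where "F x = (\<Sum>b\<in>Bs. B x b *\<^sub>R b)" for x
  have F: "linear F"
    unfolding F_def
    by (rule linearI) (simp_all add: bilinear_ladd[OF B] bilinear_lmul[OF B] scaleR_add_left
        sum.distrib scaleR_sum_right)
  have span_Bs: "(\<Sum>b\<in>Bs. u b *\<^sub>R b) \<in> S" for u
    unfolding Bs(3)[symmetric] by (intro span_sum span_scale span_base)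
  have "inj_on F S"
    unfolding linear_inj_on_iff_eq_0[OF F S]
  proof (intro ballI impI)
    fix x assume x: "x \<in> S" "F x = 0"
    then have "\<forall>b\<in>Bs. B x b = 0" using coeffs_0 unfolding F_def by blast
    then have "\<forall>y\<in>S. B x y = 0"
      using linear_eq_0_on_span[of "B x" Bs] B Bs(3) unfolding bilinear_def by blast
    then show "x = 0" using nondeg x(1) by blast
  qed
  then have "F ` S = S" using linear_inj_on_imp_surj_on[OF F S] span_Bs unfolding F_def by blast
  then obtain x where x: "x \<in> S" "F x = (\<Sum>b\<in>Bs. \<phi> b *\<^sub>R b)"
    using span_Bs by (metis imageE)
  then have "(\<Sum>b\<in>Bs. (B x b - \<phi> b) *\<^sub>R b) = 0"
    by (simp add: F_def scaleR_diff_left sum_subtractf)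
  then have "\<forall>b\<in>Bs. B x b = \<phi> b" using coeffs_0 by fastforce
  then show ?thesis using agree x(1) by blast
qed

section \<open>The form eta, its orthogonal group and its Lie algebra\<close>

lemma lorentz_form_symmetric: "lorentz_form E \<Longrightarrow> transpose E = E"
  unfolding lorentz_form_def by blast

lemma lorentz_form_invertible:
  fixes E :: "real^'n^'n"
  assumes "lorentz_form E"
  shows "invertible E"
proof -
  obtain P :: "real^'n^'n" and i0 where P: "invertible P"
    and E: "E = transpose P ** (\<chi> i j. if i = j then (if i = i0 then 1 else -1) else 0) ** P"
    using assms unfolding lorentz_form_def by blast
  have "det (\<chi> i j. if i = j then (if i = i0 then 1 else -1) else 0 :: real^'n^'n) \<noteq> 0"
    by (subst det_diagonal) (auto simp: prod_zero_iff)
  then show ?thesis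
    using P unfolding E by (simp add: invertible_det_nz det_mul)
qed

lemma bilinear_eta: "bilinear (eta E)"
  unfolding bilinear_def eta_def
  by (auto intro!: linearI simp: inner_add_left inner_add_right algebra_simps)

lemma eta_matrix_left: "eta E (A *v u) v = eta (transpose A ** E) u v"
  unfolding eta_def by (metis dot_lmul_matrix matrix_vector_mul_assoc vector_transpose_matrix)

lemma eta_matrix_right: "eta E u (A *v v) = eta (E ** A) u v"
  unfolding eta_def by (simp add: matrix_vector_mul_assoc)

lemma eta_commute: "transpose E = E \<Longrightarrow> eta E u v = eta E v u"
  unfolding eta_def by (metis dot_lmul_matrix inner_commute transpose_matrix_vector)

lemma eta_eq_0_iff: "(\<forall>u v. eta M u v = 0) \<longleftrightarrow> M = 0"
proof
  assume "\<forall>u v. eta M u v = 0"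
  then have "\<forall>v. M *v v = 0 *v v" unfolding eta_def by (metis inner_eq_zero_iff matrix_vector_mult_0)
  then show "M = 0" by (simp add: matrix_eq)
qed (simp add: eta_def)

lemma so_iff_eta: "X \<in> so E \<longleftrightarrow> (\<forall>u v. eta E (X *v u) v + eta E u (X *v v) = 0)"
  unfolding so_def eta_matrix_left eta_matrix_right eta_eq_0_iff[symmetric]
  by (simp add: eta_def matrix_vector_mult_add_rdistrib inner_add_right)

lemma subspace_so: "subspace (so E)"
proof -
  have mult_E: "linear (\<lambda>Y. Y ** E)" "linear (\<lambda>Y. E ** Y)"
    using bilinear_matrix_mult unfolding bilinear_def by blast+
  have "linear (\<lambda>X. transpose X ** E + E ** X)"
    using linear_compose[OF linear_transpose mult_E(1)] mult_E(2)
    unfolding o_def by (rule linear_compose_add)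
  then show ?thesis unfolding so_def by (rule linear_subspace_kernel)
qed

lemma SO_invertible: "g \<in> SO E \<Longrightarrow> invertible g"
  unfolding SO_def by (simp add: invertible_det_nz)

lemma SO_matrix_inv:
  fixes g :: "real^'n^'n"
  assumes g: "g \<in> SO E"
  shows "matrix_inv g \<in> SO E"
proof -
  have inv: "g ** matrix_inv g = mat 1" using matrix_inv_left_right SO_invertible g by blast
  have "det g * det (matrix_inv g) = 1" by (metis inv det_mul det_I)
  then have "det (matrix_inv g) = 1" using g unfolding SO_def by simp
  have "E = transpose (g ** matrix_inv g) ** E ** (g ** matrix_inv g)" by (simp add: inv)
  also have "\<dots> = transpose (matrix_inv g) ** (transpose g ** E ** g) ** matrix_inv g"
    by (simp add: matrix_transpose_mul matrix_mul_assoc)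
  also have "\<dots> = transpose (matrix_inv g) ** E ** matrix_inv g" using g unfolding SO_def by simp
  finally show ?thesis using g inv \<open>det (matrix_inv g) = 1\<close> unfolding SO_def by simp
qed

lemma SO_preserves_eta: "g \<in> SO E \<Longrightarrow> eta E (g *v u) (g *v v) = eta E u v"
  unfolding SO_def by (simp add: eta_matrix_left eta_matrix_right matrix_mul_assoc)

lemma groupA_SO: "a \<in> groupA E s \<Longrightarrow> a \<in> SO E"
  unfolding groupA_def SO0_def using connected_component_subset by blast

lemma mat_1_groupA: "mat 1 \<in> groupA E s"
proof -
  have "mat 1 \<in> SO E" unfolding SO_def by simp
  then show ?thesis unfolding groupA_def SO0_def by (simp add: connected_component_refl)
qed

lemma linear_ad: "linear (ad g)"
proof -
  have "linear (\<lambda>X. g ** X)" "linear (\<lambda>Y. Y ** matrix_inv g)"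
    using bilinear_matrix_mult unfolding bilinear_def by blast+
  from linear_compose[OF this] show ?thesis by (simp add: ad_def[abs_def] o_def)
qed

lemma ad_mat_1: "ad (mat 1) X = X"
  by (simp add: ad_def matrix_inv_mat_1)

lemma ad_ad_matrix_inv:
  fixes g :: "real^'n^'n"
  assumes "invertible g"
  shows "ad g (ad (matrix_inv g) X) = X"
proof -
  have "ad g (ad (matrix_inv g) X) = (g ** matrix_inv g) ** X ** (g ** matrix_inv g)"
    unfolding ad_def matrix_inv_matrix_inv[OF assms] by (simp add: matrix_mul_assoc)
  then show ?thesis by (simp add: matrix_inv_left_right assms)
qed

lemma ad_so:
  fixes g :: "real^'n^'n"
  assumes g: "g \<in> SO E" and X: "X \<in> so E"
  shows "ad g X \<in> so E"
proof -
  let ?h = "matrix_inv g"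
  have g_h: "g *v (?h *v w) = w" for w
    using matrix_inv_left_right(1)[OF SO_invertible[OF g]] by (simp add: matrix_vector_mul_assoc)
  have ad_apply: "ad g X *v w = g *v (X *v (?h *v w))" for w
    unfolding ad_def by (simp add: matrix_vector_mul_assoc matrix_mul_assoc)
  have "eta E (ad g X *v u) v + eta E u (ad g X *v v) = 0" for u v
  proof -
    have "eta E (ad g X *v u) v + eta E u (ad g X *v v)
        = eta E (g *v (X *v (?h *v u))) (g *v (?h *v v)) + eta E (g *v (?h *v u)) (g *v (X *v (?h *v v)))"
      by (simp only: ad_apply g_h)
    also have "\<dots> = eta E (X *v (?h *v u)) (?h *v v) + eta E (?h *v u) (X *v (?h *v v))"
      by (simp only: SO_preserves_eta[OF g])
    also have "\<dots> = 0" using X so_iff_eta by blast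
    finally show ?thesis .
  qed
  then show ?thesis using so_iff_eta by blast
qed

lemma Lam_apply: "Lam E x y *v z = eta E y z *\<^sub>R x - eta E x z *\<^sub>R y"
proof -
  have "linear (\<lambda>z. eta E y z *\<^sub>R x - eta E x z *\<^sub>R y)"
    by (rule linearI)
      (simp_all add: bilinear_radd[OF bilinear_eta] bilinear_rmul[OF bilinear_eta] algebra_simps)
  then show ?thesis unfolding Lam_def by (simp add: matrix_works linear_matrix_vector_mul_eq)
qed

lemma Lam_so:
  assumes "transpose E = E"
  shows "Lam E x y \<in> so E"
  unfolding so_iff_eta Lam_apply
  by (simp add: bilinear_lsub[OF bilinear_eta] bilinear_rsub[OF bilinear_eta]
      bilinear_lmul[OF bilinear_eta] bilinear_rmul[OF bilinear_eta] eta_commute[OF assms])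

lemma alg_c_subset_so: "transpose E = E \<Longrightarrow> alg_c E s t \<subseteq> so E"
  unfolding alg_c_def by (rule span_minimal) (auto simp: Lam_so subspace_so)

section \<open>The trace form and its inverse\<close>

lemma bilinear_kform: "bilinear (kform :: real^'n^'n \<Rightarrow> real^'n^'n \<Rightarrow> real)"
  unfolding bilinear_def kform_def
  by (intro conjI allI linearI)
    (simp_all only: bilinear_ladd[OF bilinear_matrix_mult] bilinear_radd[OF bilinear_matrix_mult]
      bilinear_lmul[OF bilinear_matrix_mult] bilinear_rmul[OF bilinear_matrix_mult]
      trace_add trace_scaleR add_divide_distrib times_divide_eq_right real_scaleR_def)

lemma kform_commute: "kform X Y = kform Y X"
  unfolding kform_def by (subst trace_mul_sym) (rule refl)

lemma kform_nondegenerate_so: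
  fixes E X :: "real^'n^'n"
  assumes sym: "transpose E = E" and inv: "invertible E"
    and X: "X \<in> so E" and orth: "\<forall>Y\<in>so E. kform X Y = 0"
  shows "X = 0"
proof -
  let ?F = "matrix_inv E"
  note mult = bilinear_matrix_mult
  have F: "E ** ?F = mat 1" "?F ** E = mat 1" "transpose ?F = ?F"
    using matrix_inv_left_right[OF inv] transpose_matrix_inv_symmetric[OF sym inv] by auto
  have XE: "transpose X ** E = - (E ** X)" using X unfolding so_def by (simp add: eq_neg_iff_add_eq_0)
  have "?F ** transpose X = ?F ** (transpose X ** E) ** ?F"
    by (simp add: F(1) flip: matrix_mul_assoc)
  also have "\<dots> = - ((?F ** E) ** X ** ?F)"
    by (simp add: XE bilinear_lneg[OF mult] bilinear_rneg[OF mult] matrix_mul_assoc)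
  finally have FX: "?F ** transpose X = - (X ** ?F)" by (simp add: F(2))
  \<comment> \<open>This Y lies in so E and tr(X Y) is the squared norm of X E\<inverse>.\<close>
  define Y where "Y = ?F ** ?F ** transpose X"
  have "transpose Y = X ** (?F ** ?F)"
    unfolding Y_def by (simp add: matrix_transpose_mul F(3) matrix_mul_assoc)
  then have "transpose Y ** E = X ** ?F" by (simp add: F(2) flip: matrix_mul_assoc)
  moreover have "E ** Y = ?F ** transpose X"
    unfolding Y_def by (simp add: F(1) matrix_mul_assoc)
  ultimately have "transpose Y ** E + E ** Y = X ** ?F + ?F ** transpose X" by simp
  then have "Y \<in> so E" unfolding so_def using FX by simp
  moreover have "(X ** ?F) ** transpose (X ** ?F) = X ** Y"
    unfolding Y_def by (simp add: matrix_transpose_mul F(3) matrix_mul_assoc)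
  ultimately have "trace ((X ** ?F) ** transpose (X ** ?F)) = 0"
    using orth unfolding kform_def by simp
  then have "X ** ?F = 0" by (simp add: trace_mult_transpose)
  then have "X ** ?F ** E = 0" by simp
  then show "X = 0" by (simp add: F(2) flip: matrix_mul_assoc)
qed

lemma kinv_spec:
  assumes E: "lorentz_form E" and \<phi>: "\<phi> \<in> gdual E"
  shows "kinv E \<phi> \<in> so E \<and> (\<forall>Y\<in>so E. kform (kinv E \<phi>) Y = \<phi> Y)"
proof -
  have nondeg: "X = 0" if "X \<in> so E" "\<forall>Y\<in>so E. kform X Y = 0" for X
    using kform_nondegenerate_so[OF lorentz_form_symmetric[OF E] lorentz_form_invertible[OF E]] that
    by blast
  have "\<exists>X\<in>so E. \<forall>Y\<in>so E. kform X Y = \<phi> Y"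
    using \<phi> by (intro bilinear_nondegenerate_represents[OF subspace_so bilinear_kform nondeg])
      (auto simp: gdual_def)
  moreover have "X = X'"
    if "X \<in> so E" "\<forall>Y\<in>so E. kform X Y = \<phi> Y" "X' \<in> so E" "\<forall>Y\<in>so E. kform X' Y = \<phi> Y" for X X'
    using nondeg[of "X - X'"] that subspace_so[of E]
    by (simp add: subspace_diff bilinear_lsub[OF bilinear_kform])
  ultimately have "\<exists>!X. X \<in> so E \<and> (\<forall>Y\<in>so E. kform X Y = \<phi> Y)" by blast
  then show ?thesis unfolding kinv_def by (rule theI')
qed

lemma ktilde_commute: "ktilde E \<phi> \<psi> = ktilde E \<psi> \<phi>"
  unfolding ktilde_def by (rule kform_commute)

lemma ktilde_eq_apply_kinv:
  assumes "lorentz_form E" "\<phi> \<in> gdual E" "\<psi> \<in> gdual E"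
  shows "ktilde E \<phi> \<psi> = \<psi> (kinv E \<phi>)"
proof -
  have "ktilde E \<phi> \<psi> = kform (kinv E \<psi>) (kinv E \<phi>)"
    unfolding ktilde_def by (rule kform_commute)
  then show ?thesis using kinv_spec[OF assms(1,2)] kinv_spec[OF assms(1,3)] by simp
qed

lemma ktilde_orthonormal_basis_expansion:
  assumes E: "lorentz_form E" and onb: "ktilde_orthonormal_basis E S I \<rho>"
    and S: "S \<subseteq> gdual E" and \<psi>: "\<psi> \<in> S"
  shows "\<psi> X = (\<Sum>\<alpha>\<in>I. sgn_k E (\<rho> \<alpha>) * ktilde E (\<rho> \<alpha>) \<psi> * \<rho> \<alpha> X)"
proof -
  have I: "finite I" and \<rho>: "\<And>\<alpha>. \<alpha> \<in> I \<Longrightarrow> \<rho> \<alpha> \<in> gdual E"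
    and orth: "\<And>\<alpha> \<beta>. \<alpha> \<in> I \<Longrightarrow> \<beta> \<in> I \<Longrightarrow> \<alpha> \<noteq> \<beta> \<Longrightarrow> ktilde E (\<rho> \<alpha>) (\<rho> \<beta>) = 0"
    and unit: "\<And>\<alpha>. \<alpha> \<in> I \<Longrightarrow> \<bar>sgn_k E (\<rho> \<alpha>)\<bar> = 1"
    using onb S unfolding ktilde_orthonormal_basis_def sgn_k_def by auto
  obtain v where v: "\<And>X. \<psi> X = (\<Sum>\<beta>\<in>I. v \<beta> * \<rho> \<beta> X)"
    using onb \<psi> unfolding ktilde_orthonormal_basis_def by blast
  have coeff: "ktilde E (\<rho> \<alpha>) \<psi> = sgn_k E (\<rho> \<alpha>) * v \<alpha>" if \<alpha>: "\<alpha> \<in> I" for \<alpha>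
  proof -
    have "ktilde E (\<rho> \<alpha>) \<psi> = (\<Sum>\<beta>\<in>I. v \<beta> * \<rho> \<beta> (kinv E (\<rho> \<alpha>)))"
      using ktilde_eq_apply_kinv[OF E \<rho>[OF \<alpha>]] \<psi> S v by auto
    also have "\<dots> = (\<Sum>\<beta>\<in>I. if \<beta> = \<alpha> then v \<alpha> * sgn_k E (\<rho> \<alpha>) else 0)"
    proof (rule sum.cong)
      fix \<beta> assume \<beta>: "\<beta> \<in> I"
      show "v \<beta> * \<rho> \<beta> (kinv E (\<rho> \<alpha>)) = (if \<beta> = \<alpha> then v \<alpha> * sgn_k E (\<rho> \<alpha>) else 0)"
        using ktilde_eq_apply_kinv[OF E \<rho>[OF \<alpha>] \<rho>[OF \<beta>], symmetric] orth[OF \<alpha> \<beta>]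
        unfolding sgn_k_def by auto
    qed simp
    finally show ?thesis using I \<alpha> by simp
  qed
  have summand: "sgn_k E (\<rho> \<alpha>) * ktilde E (\<rho> \<alpha>) \<psi> * \<rho> \<alpha> X = v \<alpha> * \<rho> \<alpha> X"
    if "\<alpha> \<in> I" for \<alpha>
  proof -
    have "sgn_k E (\<rho> \<alpha>) * sgn_k E (\<rho> \<alpha>) = 1"
      using unit[OF that] by (metis abs_mult_self_eq mult_1)
    then show ?thesis using coeff[OF that] by (metis mult.assoc mult_1)
  qed
  then show ?thesis using v sum.cong[OF refl summand, of I] by simp
qed

section \<open>The coadjoint action\<close>

lemma adsharp_gdual:
  assumes g: "g \<in> SO E" and \<psi>: "\<psi> \<in> gdual E"
  shows "adsharp E g \<psi> \<in> gdual E"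
  using \<psi> ad_so[OF SO_matrix_inv[OF g]] subspace_so[of E]
  by (auto simp: gdual_def adsharp_def linear_add[OF linear_ad] linear_scale[OF linear_ad]
      subspace_add subspace_scale)

lemma adsharp_mat_1: "\<psi> \<in> gdual E \<Longrightarrow> adsharp E (mat 1) \<psi> = \<psi>"
  unfolding adsharp_def matrix_inv_mat_1 ad_mat_1 gdual_def by auto

lemma adsharp_annihilator_alg_a:
  assumes g: "g \<in> SO E" "g *v s = s \<or> g *v s = - s"
    and \<psi>: "\<psi> \<in> annihilator E (alg_a E s)"
  shows "adsharp E g \<psi> \<in> annihilator E (alg_a E s)"
proof -
  have "ad (matrix_inv g) Y \<in> alg_a E s" if Y: "Y \<in> alg_a E s" for Y
  proof -
    have "ad (matrix_inv g) Y *v s = matrix_inv g *v (Y *v (g *v s))"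
      unfolding ad_def matrix_inv_matrix_inv[OF SO_invertible[OF g(1)]]
      by (simp add: matrix_vector_mul_assoc matrix_mul_assoc)
    also have "\<dots> = 0"
      using Y g(2) linear_neg[OF matrix_vector_mul_linear, of Y s] unfolding alg_a_def by auto
    finally show ?thesis
      using Y ad_so[OF SO_matrix_inv[OF g(1)]] unfolding alg_a_def by blast
  qed
  then show ?thesis
    using \<psi> adsharp_gdual[OF g(1)] unfolding annihilator_def alg_a_def adsharp_def by auto
qed

lemma adsharp_matrix_inv_groupA:
  assumes a: "a \<in> groupA E s" and \<xi>: "\<xi> \<in> annihilator E (alg_a E s)"
  shows "adsharp E (matrix_inv a) \<xi> \<in> annihilator E (alg_a E s)"
    and "X \<in> so E \<Longrightarrow> adsharp E (matrix_inv a) \<xi> X = \<xi> (ad a X)"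
proof -
  have a_SO: "a \<in> SO E" and a_s: "a *v s = s \<or> a *v s = - s"
    using a groupA_SO unfolding groupA_def by auto
  show "adsharp E (matrix_inv a) \<xi> \<in> annihilator E (alg_a E s)"
    using SO_matrix_inv[OF a_SO] matrix_inv_stabilizes_line[OF SO_invertible[OF a_SO] a_s] \<xi>
    by (rule adsharp_annihilator_alg_a)
  show "X \<in> so E \<Longrightarrow> adsharp E (matrix_inv a) \<xi> X = \<xi> (ad a X)"
    unfolding adsharp_def matrix_inv_matrix_inv[OF SO_invertible[OF a_SO]] by simp
qed

lemma ktilde_adsharp:
  assumes E: "lorentz_form E" and \<phi>: "\<phi> \<in> gdual E" and g: "g \<in> SO E" and \<rho>: "\<rho> \<in> gdual E"
  shows "ktilde E \<phi> (adsharp E g \<rho>) = \<rho> (ad (matrix_inv g) (kinv E \<phi>))"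
  using ktilde_eq_apply_kinv[OF E \<phi> adsharp_gdual[OF g \<rho>]] kinv_spec[OF E \<phi>]
  by (simp add: adsharp_def)

theorem lemma2p1:
  fixes E :: "real^'n^'n" and s t :: "real^'n"
    and I :: "'i set" and \<rho> :: "'i \<Rightarrow> ('n mat \<Rightarrow> real)" and c :: "'i \<Rightarrow> real^'n^'n"
  assumes dim: "CARD('n) \<ge> 4"
    and form: "lorentz_form E"
    and ss: "eta E s s = -1" and tt: "eta E t t = 1" and st: "eta E s t = 0"
    and onb: "ktilde_orthonormal_basis E (annihilator E (alg_a E s)) I \<rho>"
    and c_in: "\<forall>\<alpha>\<in>I. c \<alpha> \<in> alg_c E s t"
    and c_prop: "\<forall>\<alpha>\<in>I. \<forall>\<psi>\<in>annihilator E (alg_a E s). \<forall>a\<in>groupA E s.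
                   ktilde E \<psi> (adsharp E a (\<rho> \<alpha>)) = \<psi> (ad a (c \<alpha>))"
  shows "\<forall>\<phi>\<in>annihilator E (alg_a E s). \<forall>p\<in>annihilator E (alg_a E s) \<times> groupA E s.
           kt_fun E \<phi> p = (\<Sum>\<alpha>\<in>I. sgn_k E (\<rho> \<alpha>) * kt_fun2 E \<phi> (\<rho> \<alpha>) p * XL_fun (c \<alpha>) p)"
proof (intro ballI)
  let ?A0 = "annihilator E (alg_a E s)"
  fix \<phi> p assume \<phi>: "\<phi> \<in> ?A0" and "p \<in> ?A0 \<times> groupA E s"
  then obtain \<xi> a where p: "p = (\<xi>, a)" and \<xi>: "\<xi> \<in> ?A0" and a: "a \<in> groupA E s" by blast
  have A0: "?A0 \<subseteq> gdual E" unfolding annihilator_def by blast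
  have \<rho>: "\<And>\<alpha>. \<alpha> \<in> I \<Longrightarrow> \<rho> \<alpha> \<in> ?A0" using onb unfolding ktilde_orthonormal_basis_def by blast
  define \<xi>' where "\<xi>' = adsharp E (matrix_inv a) \<xi>"
  note \<xi>' = adsharp_matrix_inv_groupA[OF a \<xi>, folded \<xi>'_def]
  have XL_c: "\<xi> (ad a (c \<alpha>)) = ktilde E (\<rho> \<alpha>) \<xi>'" if "\<alpha> \<in> I" for \<alpha>
    using c_prop that \<xi>'(1) mat_1_groupA adsharp_mat_1 \<rho>[OF that] A0 ad_mat_1
      \<xi>'(2) c_in alg_c_subset_so[OF lorentz_form_symmetric[OF form]] ktilde_commute
    by (metis subsetD)
  let ?K = "ad (matrix_inv a) (kinv E \<phi>)"
  have "(\<Sum>\<alpha>\<in>I. sgn_k E (\<rho> \<alpha>) * kt_fun2 E \<phi> (\<rho> \<alpha>) p * XL_fun (c \<alpha>) p)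
      = (\<Sum>\<alpha>\<in>I. sgn_k E (\<rho> \<alpha>) * ktilde E (\<rho> \<alpha>) \<xi>' * \<rho> \<alpha> ?K)"
    unfolding p kt_fun2_def XL_fun_def
    using ktilde_adsharp[OF form _ groupA_SO[OF a]] \<phi> \<rho> A0 XL_c
    by (auto intro!: sum.cong simp: subsetD)
  also have "\<dots> = \<xi>' ?K"
    by (rule ktilde_orthonormal_basis_expansion[OF form onb A0 \<xi>'(1), symmetric])
  also have "\<dots> = \<xi> (kinv E \<phi>)"
    using \<xi>'(2) ad_so[OF SO_matrix_inv[OF groupA_SO[OF a]]] kinv_spec[OF form] \<phi> A0
      ad_ad_matrix_inv[OF SO_invertible[OF groupA_SO[OF a]]] by auto
  also have "\<dots> = kt_fun E \<phi> p"
    unfolding p kt_fun_def using ktilde_eq_apply_kinv[OF form] \<phi> \<xi> A0 by (simp add: subsetD)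
  finally show "kt_fun E \<phi> p = (\<Sum>\<alpha>\<in>I. sgn_k E (\<rho> \<alpha>) * kt_fun2 E \<phi> (\<rho> \<alpha>) p * XL_fun (c \<alpha>) p)" ..
qed

end
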